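(* The map taking a model to its data is injective on the set of all generic models (of all layer numbers $M\ge1$): if $(\tau,R)$ is a generic $M$-layer model and $(\tau',R')$ is a generic $M'$-layer model with the same data $(\sigma,\alpha)$, then $M=M'$, $\tau=\tau'$ and $R=R'$.
   Context: An $M$-layer model ($M\ge1$) is $(\tau,R)$ with $\tau\in\mathbb{R}^{M+1}_{>0}$, $R\in(-1,1)^{M+1}$. $\mathfrak{L}_M\subset\mathbb{Z}^{M+1}_{\geq0}$: all $k$ with $k_0=1$ and $k_n>0\Rightarrow k_{n-1}>0$ ($1\le n\le M$); $\mathfrak{L}^\tau_M=\{k\in\mathfrak{L}_M:\langle k,\tau\rangle\le\langle\mathbb{1},\tau\rangle\}$. Amplitude polynomial: $\mathbb{1}=(1,\ldots,1)$; inequalities and $\min$ entrywise; $x^k=\prod_n x_n^{k_n}$, $\binom{k}{b}=\prod_n\binom{k_n}{b_n}$; $\tilde k=(k_1,\ldots,k_M,0)$, $u=\min\{\mathbb{1},\tilde k\}$, $V(k)=\{b:u\le b\le\min\{k,\tilde k\}\}$, $a(x,k)=\sum_{b\in V(k)}\binom{k}{b}\binom{\tilde k-u}{b-u}(-x)^{\tilde k-b}x^{k-b}\prod_n(1-x_n^2)^{b_n}$. The data $(\sigma,\alpha)$ of $(\tau,R)$ is read off from the normal form $\sum_{n=1}^d\alpha_n\delta(t-\sigma_n)$ ($\alpha_n\neq0$, $\sigma_1<\cdots<\sigma_d$) of $D^{(\tau,R)}(t)=\sum_{k\in\mathfrak{L}^\tau_M}a(R,k)\delta(t-\langle k,\tau\rangle)$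 (the impulse response truncated to $[0,|\tau|]$). Enumeration function $\Psi(\tau,R):\mathfrak{L}^\tau_M\to\{0,\ldots,d\}$: $k\mapsto0$ if $\langle k,\tau\rangle\notin\{\sigma_n\}$, else $k\mapsto1+\#\{n:\sigma_n<\langle k,\tau\rangle\}$. A model is generic if its enumeration function is injective and never $0$. *)

theory Defs
  imports Complex_Main
begin

text \<open>Vectors in R^(M+1) / Z_{>=0}^(M+1) are lists of length M+1, indexed 0..M.\<close>

definition is_model :: "nat \<Rightarrow> real list \<Rightarrow> real list \<Rightarrow> bool" where
  "is_model M \<tau> R \<longleftrightarrow> M \<ge> 1 \<and> length \<tau> = Suc M \<and> length R = Suc M \<and>
     (\<forall>n\<le>M. \<tau> ! n > 0) \<and> (\<forall>n\<le>M. -1 < R ! n \<and> R ! n < 1)"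

definition inner_kt :: "nat \<Rightarrow> nat list \<Rightarrow> real list \<Rightarrow> real" where
  "inner_kt M k \<tau> = (\<Sum>n\<le>M. real (k ! n) * \<tau> ! n)"

definition Lset :: "nat \<Rightarrow> nat list set" where
  "Lset M = {k. length k = Suc M \<and> k ! 0 = 1 \<and> (\<forall>n\<in>{1..M}. 0 < k ! n \<longrightarrow> 0 < k ! (n - 1))}"

definition Lset_tau :: "nat \<Rightarrow> real list \<Rightarrow> nat list set" where
  "Lset_tau M \<tau> = {k \<in> Lset M. inner_kt M k \<tau> \<le> (\<Sum>n\<le>M. \<tau> ! n)}"

definition ktil :: "nat \<Rightarrow> nat list \<Rightarrow> nat \<Rightarrow> nat" where
  "ktil M k n = (if n < M then k ! Suc n else 0)"

definition uvec :: "nat \<Rightarrow> nat list \<Rightarrow> nat \<Rightarrow> nat" where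
  "uvec M k n = min 1 (ktil M k n)"

definition Vset :: "nat \<Rightarrow> nat list \<Rightarrow> nat list set" where
  "Vset M k = {b. length b = Suc M \<and>
     (\<forall>n\<le>M. uvec M k n \<le> b ! n \<and> b ! n \<le> min (k ! n) (ktil M k n))}"

definition amp :: "nat \<Rightarrow> real list \<Rightarrow> nat list \<Rightarrow> real" where
  "amp M x k = (\<Sum>b\<in>Vset M k. \<Prod>n\<le>M.
      real (k ! n choose b ! n) * real ((ktil M k n - uvec M k n) choose (b ! n - uvec M k n))
      * (- (x ! n)) ^ (ktil M k n - b ! n) * (x ! n) ^ (k ! n - b ! n)
      * (1 - (x ! n)^2) ^ (b ! n))"

text \<open>Normal form of D = sum_k a(R,k) delta(t - <k,tau>): total coefficient at time t.\<close>
definition coefD :: "nat \<Rightarrow> real list \<Rightarrow> real list \<Rightarrow> real \<Rightarrow> real" where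
  "coefD M \<tau> R t = (\<Sum>k\<in>{k \<in> Lset_tau M \<tau>. inner_kt M k \<tau> = t}. amp M R k)"

definition suppD :: "nat \<Rightarrow> real list \<Rightarrow> real list \<Rightarrow> real set" where
  "suppD M \<tau> R = {t. (\<exists>k\<in>Lset_tau M \<tau>. inner_kt M k \<tau> = t) \<and> coefD M \<tau> R t \<noteq> 0}"

definition sigma_of :: "nat \<Rightarrow> real list \<Rightarrow> real list \<Rightarrow> real list" where
  "sigma_of M \<tau> R = sorted_list_of_set (suppD M \<tau> R)"

definition alpha_of :: "nat \<Rightarrow> real list \<Rightarrow> real list \<Rightarrow> real list" where
  "alpha_of M \<tau> R = map (coefD M \<tau> R) (sigma_of M \<tau> R)"

definition model_data :: "nat \<Rightarrow> real list \<Rightarrow> real list \<Rightarrow> real list \<times> real list" where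
  "model_data M \<tau> R = (sigma_of M \<tau> R, alpha_of M \<tau> R)"

definition Psi :: "nat \<Rightarrow> real list \<Rightarrow> real list \<Rightarrow> nat list \<Rightarrow> nat" where
  "Psi M \<tau> R k = (let s = sigma_of M \<tau> R; t = inner_kt M k \<tau> in
     if t \<notin> set s then 0 else 1 + card {n. n < length s \<and> s ! n < t})"

definition generic :: "nat \<Rightarrow> real list \<Rightarrow> real list \<Rightarrow> bool" where
  "generic M \<tau> R \<longleftrightarrow> inj_on (Psi M \<tau> R) (Lset_tau M \<tau>) \<and> (\<forall>k\<in>Lset_tau M \<tau>. Psi M \<tau> R k \<noteq> 0)"

end

theory Submission
  imports Defs
begin

(* For a generic model the arrival times <k,tau> of the paths k in L^tau_M are
   pairwise distinct and all of them survive in the normal form of D, so sigma lists exactly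
   these times and the weight at the time of k is the amplitude a(R,k).  Let W_n(tau) be the
   set of arrival times of paths confined to the layers 0,...,n-1; it depends only on
   tau_0,...,tau_{n-1}.  Genericity implies that the time of a path lies in W_n(tau) iff the
   path is confined to the first n layers.  Hence the least element of sigma outside W_n(tau)
   is tau_0+...+tau_n, the time of the primary reflection off layer n, whose amplitude is
   (1-R_0^2)...(1-R_{n-1}^2) R_n.  By induction on n the data determine tau_n and R_n for
   every layer common to both models, and since sigma lies inside W_{M+1}(tau) they also
   determine the number of layers M. *)

lemma model_tau_pos: "is_model M \<tau> R \<Longrightarrow> j \<le> M \<Longrightarrow> 0 < \<tau> ! j"
  unfolding is_model_def by auto

lemma model_transmission_nonzero:
  assumes "is_model M \<tau> R" "j \<le> M"
  shows "1 - (R ! j)\<^sup>2 \<noteq> 0"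
proof -
  have "\<bar>R ! j\<bar> < 1" using assms unfolding is_model_def by auto
  then have "(R ! j)\<^sup>2 < 1" by (simp add: abs_square_less_1)
  then show ?thesis by simp
qed

lemma Lset_support_initial:
  assumes "k \<in> Lset M" "j \<le> M" "0 < k ! j" "i \<le> j"
  shows "0 < k ! i"
  using assms(2-4)
proof (induction j arbitrary: i)
  case 0
  then show ?case by simp
next
  case (Suc j)
  have "Suc j \<in> {1..M}" using Suc.prems(1) by simp
  moreover have "\<forall>m\<in>{1..M}. 0 < k ! m \<longrightarrow> 0 < k ! (m - 1)"
    using assms(1) unfolding Lset_def by blast
  ultimately have "0 < k ! j" using Suc.prems(2) by fastforce
  then show ?case
    using Suc by (cases "i = Suc j") auto
qed

lemma time_lower_bound:
  assumes pos: "\<forall>i\<le>M. 0 < \<tau> ! i"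
    and k: "k \<in> Lset M" and "n \<le> j" "j \<le> M" "0 < k ! j"
  shows "(\<Sum>i\<le>n. \<tau> ! i) \<le> inner_kt M k \<tau>"
proof -
  have "(\<Sum>i\<le>n. \<tau> ! i) \<le> (\<Sum>i\<le>n. real (k ! i) * \<tau> ! i)"
  proof (rule sum_mono)
    fix i assume "i \<in> {..n}"
    then have "i \<le> j" using \<open>n \<le> j\<close> by simp
    then have "0 < k ! i" by (rule Lset_support_initial[OF k \<open>j \<le> M\<close> \<open>0 < k ! j\<close>])
    then have "1 \<le> real (k ! i)" by simp
    moreover have "0 < \<tau> ! i" using pos \<open>i \<le> j\<close> \<open>j \<le> M\<close> by simp
    ultimately show "\<tau> ! i \<le> real (k ! i) * \<tau> ! i" by simp
  qed
  also have "\<dots> \<le> (\<Sum>i\<le>M. real (k ! i) * \<tau> ! i)"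
    by (rule sum_mono2) (use pos \<open>n \<le> j\<close> \<open>j \<le> M\<close> in \<open>auto intro: less_imp_le\<close>)
  finally show ?thesis unfolding inner_kt_def .
qed

definition primary_path :: "nat \<Rightarrow> nat \<Rightarrow> nat list" where
  "primary_path M n = map (\<lambda>j. if j \<le> n then 1 else 0) [0..<Suc M]"

lemma primary_path_nth: "j \<le> M \<Longrightarrow> primary_path M n ! j = (if j \<le> n then 1 else 0)"
  unfolding primary_path_def by (simp del: upt_Suc)

lemma primary_path_time:
  assumes "n \<le> M"
  shows "inner_kt M (primary_path M n) \<tau> = (\<Sum>j\<le>n. \<tau> ! j)"
proof -
  have "inner_kt M (primary_path M n) \<tau> = (\<Sum>j\<le>M. if j \<in> {..n} then \<tau> ! j else 0)"
    unfolding inner_kt_def by (rule sum.cong) (auto simp: primary_path_nth)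
  also have "\<dots> = (\<Sum>j\<in>{..M} \<inter> {..n}. \<tau> ! j)"
    by (rule sum.inter_restrict[symmetric]) simp
  also have "{..M} \<inter> {..n} = {..n}" using assms by auto
  finally show ?thesis .
qed

lemma primary_path_Lset_tau:
  assumes "is_model M \<tau> R" "n \<le> M"
  shows "primary_path M n \<in> Lset_tau M \<tau>"
proof -
  have "primary_path M n \<in> Lset M"
    unfolding Lset_def by (auto simp: primary_path_nth) (simp add: primary_path_def)
  moreover have "(\<Sum>j\<le>n. \<tau> ! j) \<le> (\<Sum>j\<le>M. \<tau> ! j)"
    by (rule sum_mono2) (use assms model_tau_pos in \<open>auto intro: less_imp_le\<close>)
  ultimately show ?thesis
    unfolding Lset_tau_def using primary_path_time[OF assms(2)] by auto
qed

lemma Vset_primary_path: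
  assumes "n \<le> M"
  shows "Vset M (primary_path M n) = {map (\<lambda>j. if j < n then 1 else 0) [0..<Suc M]}"
    (is "_ = {?q}")
proof -
  have q: "j \<le> M \<Longrightarrow> ?q ! j = (if j < n then 1 else 0)" for j
    by (simp del: upt_Suc)
  have kt: "j \<le> M \<Longrightarrow> ktil M (primary_path M n) j = (if j < n then 1 else 0)" for j
    using assms by (auto simp: ktil_def primary_path_nth)
  then have u: "j \<le> M \<Longrightarrow> uvec M (primary_path M n) j = (if j < n then 1 else 0)" for j
    unfolding uvec_def by simp
  show ?thesis
  proof (intro set_eqI iffI)
    fix b assume "b \<in> Vset M (primary_path M n)"
    then have len: "length b = Suc M"
      and bounds: "\<forall>j\<le>M. uvec M (primary_path M n) j \<le> b ! j \<and> b ! j \<le> ktil M (primary_path M n) j"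
      unfolding Vset_def by auto
    have "b = ?q"
    proof (rule nth_equalityI)
      show "length b = length ?q" using len by simp
      fix j assume "j < length b"
      then have "j \<le> M" using len by simp
      then show "b ! j = ?q ! j"
        using bounds kt[OF \<open>j \<le> M\<close>] u[OF \<open>j \<le> M\<close>] q[OF \<open>j \<le> M\<close>] by (metis le_antisym)
    qed
    then show "b \<in> {?q}" by simp
  qed (auto simp: Vset_def kt u q primary_path_nth simp del: upt_Suc)
qed

lemma primary_path_amp:
  assumes "n \<le> M"
  shows "amp M x (primary_path M n) = (\<Prod>j<n. 1 - (x ! j)\<^sup>2) * x ! n"
proof -
  define f where "f j = (if j < n then 1 - (x ! j)\<^sup>2 else if j = n then x ! n else 1)" for j
  have kt: "j \<le> M \<Longrightarrow> ktil M (primary_path M n) j = (if j < n then 1 else 0)" for j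
    using assms by (auto simp: ktil_def primary_path_nth)
  have "amp M x (primary_path M n) = (\<Prod>j\<le>M. f j)"
    unfolding amp_def Vset_primary_path[OF assms]
    by (simp del: upt_Suc) (rule prod.cong; simp add: f_def kt uvec_def primary_path_nth del: upt_Suc)
  also have "\<dots> = (\<Prod>j\<le>n. f j)"
    by (rule prod.mono_neutral_right) (use assms in \<open>auto simp: f_def\<close>)
  also have "\<dots> = (\<Prod>j<n. f j) * f n"
    by (simp add: lessThan_Suc_atMost[symmetric])
  also have "(\<Prod>j<n. f j) = (\<Prod>j<n. 1 - (x ! j)\<^sup>2)"
    by (rule prod.cong) (auto simp: f_def)
  finally show ?thesis by (simp add: f_def)
qed

lemma generic_time_inj:
  assumes "generic M \<tau> R"
  shows "inj_on (\<lambda>k. inner_kt M k \<tau>) (Lset_tau M \<tau>)"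
proof (rule inj_onI)
  fix k k' assume "k \<in> Lset_tau M \<tau>" "k' \<in> Lset_tau M \<tau>" "inner_kt M k \<tau> = inner_kt M k' \<tau>"
  moreover from this(3) have "Psi M \<tau> R k = Psi M \<tau> R k'" unfolding Psi_def by simp
  ultimately show "k = k'" using assms unfolding generic_def inj_on_def by blast
qed

lemma generic_coefD:
  assumes "generic M \<tau> R" "k \<in> Lset_tau M \<tau>"
  shows "coefD M \<tau> R (inner_kt M k \<tau>) = amp M R k"
proof -
  have "{k' \<in> Lset_tau M \<tau>. inner_kt M k' \<tau> = inner_kt M k \<tau>} = {k}"
    using generic_time_inj[OF assms(1)] assms(2) unfolding inj_on_def by blast
  then show ?thesis unfolding coefD_def by simp
qed

lemma generic_set_sigma:
  assumes "is_model M \<tau> R" "generic M \<tau> R"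
  shows "set (sigma_of M \<tau> R) = (\<lambda>k. inner_kt M k \<tau>) ` Lset_tau M \<tau>"
proof -
  have times_in_sigma: "(\<lambda>k. inner_kt M k \<tau>) ` Lset_tau M \<tau> \<subseteq> set (sigma_of M \<tau> R)"
  proof
    fix t assume "t \<in> (\<lambda>k. inner_kt M k \<tau>) ` Lset_tau M \<tau>"
    then obtain k where "k \<in> Lset_tau M \<tau>" "t = inner_kt M k \<tau>" by auto
    moreover from this(1) have "Psi M \<tau> R k \<noteq> 0" using assms(2) unfolding generic_def by auto
    ultimately show "t \<in> set (sigma_of M \<tau> R)" unfolding Psi_def Let_def by (auto split: if_splits)
  qed
  (* sigma is nonempty, hence the support of D is finite and sigma enumerates it *)
  have "primary_path M 0 \<in> Lset_tau M \<tau>" using primary_path_Lset_tau[OF assms(1)] by simp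
  then have "inner_kt M (primary_path M 0) \<tau> \<in> set (sigma_of M \<tau> R)"
    using times_in_sigma by (meson imageI subsetD)
  then have "sigma_of M \<tau> R \<noteq> []" by auto
  then have "finite (suppD M \<tau> R)" unfolding sigma_of_def by (rule contrapos_np) simp
  then have "set (sigma_of M \<tau> R) = suppD M \<tau> R" unfolding sigma_of_def by simp
  moreover have "suppD M \<tau> R \<subseteq> (\<lambda>k. inner_kt M k \<tau>) ` Lset_tau M \<tau>"
    unfolding suppD_def by auto
  ultimately show ?thesis using times_in_sigma by auto
qed

lemma model_data_eqD:
  assumes "model_data M \<tau> R = model_data M' \<tau>' R'"
  shows "sigma_of M \<tau> R = sigma_of M' \<tau>' R'"
    and "t \<in> set (sigma_of M \<tau> R) \<Longrightarrow> coefD M \<tau> R t = coefD M' \<tau>' R' t"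
  using assms unfolding model_data_def alpha_of_def by auto

(* W_n(tau): arrival times of admissible paths confined to the layers 0,...,n-1.  It is
   defined without reference to the number of layers and depends only on tau_0..tau_{n-1}. *)
definition confined_times :: "nat \<Rightarrow> real list \<Rightarrow> real set" where
  "confined_times n \<tau> = {(\<Sum>j<n. real (c j) * \<tau> ! j) | c. c 0 = (1::nat) \<and>
      (\<forall>j. 1 \<le> j \<and> j < n \<and> 0 < c j \<longrightarrow> 0 < c (j - 1))}"

lemma confined_times_cong:
  assumes "\<forall>j<n. \<tau> ! j = \<tau>' ! j"
  shows "confined_times n \<tau> = confined_times n \<tau>'"
proof -
  have "(\<Sum>j<n. real (c j) * \<tau> ! j) = (\<Sum>j<n. real (c j) * \<tau>' ! j)" for c
    by (rule sum.cong) (auto simp: assms)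
  then show ?thesis unfolding confined_times_def by simp
qed

lemma confined_time_realised:
  assumes "t \<in> confined_times n \<tau>" "0 < n" "n \<le> Suc M"
  shows "\<exists>k\<in>Lset M. inner_kt M k \<tau> = t \<and> (\<forall>j. n \<le> j \<and> j \<le> M \<longrightarrow> k ! j = 0)"
proof -
  obtain c where c0: "c 0 = (1::nat)"
    and c_adm: "\<forall>j. 1 \<le> j \<and> j < n \<and> 0 < c j \<longrightarrow> 0 < c (j - 1)"
    and c_time: "t = (\<Sum>j<n. real (c j) * \<tau> ! j)"
    using assms(1) unfolding confined_times_def by auto
  define k where "k = map (\<lambda>j. if j < n then c j else 0) [0..<Suc M]"
  have k_nth: "j \<le> M \<Longrightarrow> k ! j = (if j < n then c j else 0)" for j
    unfolding k_def by (simp del: upt_Suc)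
  have "k \<in> Lset M"
    unfolding Lset_def using \<open>0 < n\<close> c0 c_adm k_nth by (auto simp: k_def)
  moreover have "inner_kt M k \<tau> = t"
  proof -
    have "inner_kt M k \<tau> = (\<Sum>j\<le>M. if j \<in> {..<n} then real (c j) * \<tau> ! j else 0)"
      unfolding inner_kt_def by (rule sum.cong) (auto simp: k_nth)
    also have "\<dots> = (\<Sum>j\<in>{..M} \<inter> {..<n}. real (c j) * \<tau> ! j)"
      by (rule sum.inter_restrict[symmetric]) simp
    also have "{..M} \<inter> {..<n} = {..<n}" using \<open>n \<le> Suc M\<close> by auto
    finally show ?thesis using c_time by simp
  qed
  ultimately show ?thesis using k_nth by auto
qed

(* In a generic model the time of a path lies in W_n(tau) iff the path is confined to the
   first n layers: a confined path with the same time would otherwise be a second path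
   arriving at that time. *)
lemma generic_confined_iff:
  assumes model: "is_model M \<tau> R" and gen: "generic M \<tau> R"
    and k: "k \<in> Lset_tau M \<tau>" and "n \<le> Suc M"
  shows "inner_kt M k \<tau> \<in> confined_times n \<tau> \<longleftrightarrow> (\<forall>j. n \<le> j \<and> j \<le> M \<longrightarrow> k ! j = 0)"
proof
  have kL: "k \<in> Lset M" using k unfolding Lset_tau_def by auto
  assume confined: "inner_kt M k \<tau> \<in> confined_times n \<tau>"
  (* W_0(tau) = {0}, which contains no arrival time *)
  have "n \<noteq> 0"
  proof
    assume "n = 0"
    then have "inner_kt M k \<tau> = 0" using confined unfolding confined_times_def by simp
    moreover have "\<tau> ! 0 \<le> inner_kt M k \<tau>"
      using time_lower_bound[of M \<tau> k 0 0] model_tau_pos[OF model] kL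
      unfolding Lset_def by simp
    ultimately show False using model_tau_pos[OF model, of 0] by simp
  qed
  then obtain k' where "k' \<in> Lset M" "inner_kt M k' \<tau> = inner_kt M k \<tau>"
    and k'_confined: "\<forall>j. n \<le> j \<and> j \<le> M \<longrightarrow> k' ! j = 0"
    using confined_time_realised[OF confined _ \<open>n \<le> Suc M\<close>] by blast
  moreover from this(1,2) have "k' \<in> Lset_tau M \<tau>" using k unfolding Lset_tau_def by auto
  ultimately have "k' = k" using generic_time_inj[OF gen] k unfolding inj_on_def by blast
  then show "\<forall>j. n \<le> j \<and> j \<le> M \<longrightarrow> k ! j = 0" using k'_confined by simp
next
  have kL: "k \<in> Lset M" using k unfolding Lset_tau_def by auto
  assume vanish: "\<forall>j. n \<le> j \<and> j \<le> M \<longrightarrow> k ! j = 0"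
  have "inner_kt M k \<tau> = (\<Sum>j<n. real (k ! j) * \<tau> ! j)"
    unfolding inner_kt_def by (rule sum.mono_neutral_right) (use \<open>n \<le> Suc M\<close> vanish in auto)
  moreover have "k ! 0 = 1" "\<forall>j. 1 \<le> j \<and> j < n \<and> 0 < k ! j \<longrightarrow> 0 < k ! (j - 1)"
    using kL \<open>n \<le> Suc M\<close> unfolding Lset_def by auto
  ultimately show "inner_kt M k \<tau> \<in> confined_times n \<tau>"
    unfolding confined_times_def by blast
qed

lemma generic_least_unconfined_time:
  assumes model: "is_model M \<tau> R" and gen: "generic M \<tau> R" and "n \<le> M"
  shows "(\<Sum>j\<le>n. \<tau> ! j) \<in> set (sigma_of M \<tau> R) - confined_times n \<tau>"
    and "t \<in> set (sigma_of M \<tau> R) - confined_times n \<tau> \<Longrightarrow> (\<Sum>j\<le>n. \<tau> ! j) \<le> t"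
proof -
  have p: "primary_path M n \<in> Lset_tau M \<tau>" using primary_path_Lset_tau model \<open>n \<le> M\<close> by blast
  moreover have "primary_path M n ! n \<noteq> 0" using primary_path_nth \<open>n \<le> M\<close> by simp
  ultimately have "inner_kt M (primary_path M n) \<tau> \<notin> confined_times n \<tau>"
    using generic_confined_iff[OF model gen p] \<open>n \<le> M\<close> by auto
  moreover have "inner_kt M (primary_path M n) \<tau> \<in> set (sigma_of M \<tau> R)"
    using generic_set_sigma[OF model gen] p by simp
  ultimately show "(\<Sum>j\<le>n. \<tau> ! j) \<in> set (sigma_of M \<tau> R) - confined_times n \<tau>"
    by (simp add: primary_path_time[OF \<open>n \<le> M\<close>])
next
  assume "t \<in> set (sigma_of M \<tau> R) - confined_times n \<tau>"
  then obtain k where k: "k \<in> Lset_tau M \<tau>" "t = inner_kt M k \<tau>" "t \<notin> confined_times n \<tau>"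
    using generic_set_sigma[OF model gen] by auto
  then obtain j where "n \<le> j" "j \<le> M" "0 < k ! j"
    using generic_confined_iff[OF model gen k(1)] \<open>n \<le> M\<close> by auto
  moreover have "k \<in> Lset M" using k(1) unfolding Lset_tau_def by auto
  ultimately show "(\<Sum>j\<le>n. \<tau> ! j) \<le> t"
    using time_lower_bound model_tau_pos[OF model] k(2) by blast
qed

lemma generic_sigma_confined:
  assumes "is_model M \<tau> R" "generic M \<tau> R"
  shows "set (sigma_of M \<tau> R) \<subseteq> confined_times (Suc M) \<tau>"
  using generic_set_sigma[OF assms] generic_confined_iff[OF assms] by auto

lemma data_determine_next_layer:
  assumes m: "is_model M \<tau> R" and m': "is_model M' \<tau>' R'"
    and g: "generic M \<tau> R" and g': "generic M' \<tau>' R'"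
    and data: "model_data M \<tau> R = model_data M' \<tau>' R'"
    and "n \<le> M" "n \<le> M'" and above: "\<forall>j<n. \<tau> ! j = \<tau>' ! j \<and> R ! j = R' ! j"
  shows "\<tau> ! n = \<tau>' ! n \<and> R ! n = R' ! n"
proof -
  note sigma_eq = model_data_eqD(1)[OF data]
  have W: "confined_times n \<tau>' = confined_times n \<tau>"
    by (rule confined_times_cong) (use above in auto)
  (* both primary times are the least point of sigma outside W_n *)
  have time_eq: "(\<Sum>j\<le>n. \<tau> ! j) = (\<Sum>j\<le>n. \<tau>' ! j)"
    using generic_least_unconfined_time[OF m g \<open>n \<le> M\<close>]
      generic_least_unconfined_time[OF m' g' \<open>n \<le> M'\<close>]
    unfolding sigma_eq W by (meson order_antisym)
  moreover have "(\<Sum>j<n. \<tau> ! j) = (\<Sum>j<n. \<tau>' ! j)" using above by simp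
  ultimately have "\<tau> ! n = \<tau>' ! n" by (simp add: lessThan_Suc_atMost[symmetric])
  (* and the weights there are the primary amplitudes *)
  have in_sigma: "(\<Sum>j\<le>n. \<tau> ! j) \<in> set (sigma_of M \<tau> R)"
    using generic_least_unconfined_time(1)[OF m g \<open>n \<le> M\<close>] by simp
  have "(\<Prod>j<n. 1 - (R ! j)\<^sup>2) * R ! n = coefD M \<tau> R (\<Sum>j\<le>n. \<tau> ! j)"
    using generic_coefD[OF g primary_path_Lset_tau[OF m \<open>n \<le> M\<close>]]
    by (simp add: primary_path_time[OF \<open>n \<le> M\<close>] primary_path_amp[OF \<open>n \<le> M\<close>])
  also have "\<dots> = coefD M' \<tau>' R' (\<Sum>j\<le>n. \<tau>' ! j)"
    using model_data_eqD(2)[OF data in_sigma] time_eq by simp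
  also have "\<dots> = (\<Prod>j<n. 1 - (R' ! j)\<^sup>2) * R' ! n"
    using generic_coefD[OF g' primary_path_Lset_tau[OF m' \<open>n \<le> M'\<close>]]
    by (simp add: primary_path_time[OF \<open>n \<le> M'\<close>] primary_path_amp[OF \<open>n \<le> M'\<close>])
  also have "(\<Prod>j<n. 1 - (R' ! j)\<^sup>2) = (\<Prod>j<n. 1 - (R ! j)\<^sup>2)" using above by simp
  finally have "R ! n = R' ! n"
    using model_transmission_nonzero[OF m] \<open>n \<le> M\<close> by simp
  with \<open>\<tau> ! n = \<tau>' ! n\<close> show ?thesis ..
qed

lemma data_determine_common_layers:
  assumes "is_model M \<tau> R" "is_model M' \<tau>' R'" "generic M \<tau> R" "generic M' \<tau>' R'"
    and "model_data M \<tau> R = model_data M' \<tau>' R'"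
  shows "n \<le> M \<Longrightarrow> n \<le> M' \<Longrightarrow> \<tau> ! n = \<tau>' ! n \<and> R ! n = R' ! n"
proof (induction n rule: less_induct)
  case (less n)
  show ?case
    by (rule data_determine_next_layer[OF assms less.prems], intro allI impI less.IH)
      (use less.prems in auto)
qed

(* A model with fewer layers has all of sigma inside W_{M+1}, while a model with more layers
   has its primary time off layer M+1 outside it. *)
lemma data_determine_layer_count:
  assumes m: "is_model M \<tau> R" and m': "is_model M' \<tau>' R'"
    and g: "generic M \<tau> R" and g': "generic M' \<tau>' R'"
    and sigma_eq: "sigma_of M \<tau> R = sigma_of M' \<tau>' R'"
    and common: "\<forall>n\<le>M. n \<le> M' \<longrightarrow> \<tau> ! n = \<tau>' ! n"
  shows "\<not> M < M'"
proof
  assume "M < M'"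
  then have "confined_times (Suc M) \<tau> = confined_times (Suc M) \<tau>'"
    using common by (intro confined_times_cong) auto
  then show False
    using generic_sigma_confined[OF m g] generic_least_unconfined_time(1)[OF m' g', of "Suc M"]
      \<open>M < M'\<close> sigma_eq by auto
qed

theorem corollary4p5:
  fixes M M' :: nat and \<tau> R \<tau>' R' :: "real list"
  assumes "is_model M \<tau> R" and "is_model M' \<tau>' R'"
    and "generic M \<tau> R" and "generic M' \<tau>' R'"
    and "model_data M \<tau> R = model_data M' \<tau>' R'"
  shows "M = M' \<and> \<tau> = \<tau>' \<and> R = R'"
proof -
  note layers = data_determine_common_layers[OF assms]
  note sigma_eq = model_data_eqD(1)[OF assms(5)]
  have "\<not> M < M'"
    using data_determine_layer_count[OF assms(1-4) sigma_eq] layers by blast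
  moreover have "\<not> M' < M"
    using data_determine_layer_count[OF assms(2,1,4,3) sigma_eq[symmetric]] layers by simp
  ultimately have "M = M'" by simp
  then have "length \<tau> = Suc M" "length \<tau>' = Suc M" "length R = Suc M" "length R' = Suc M"
    using assms(1,2) unfolding is_model_def by simp_all
  then have "\<tau> = \<tau>'" "R = R'"
    using layers \<open>M = M'\<close> by (auto simp: list_eq_iff_nth_eq less_Suc_eq_le)
  with \<open>M = M'\<close> show ?thesis by simp
qed

end
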